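(* For every integer $k\ge 0$, $M_{2k+1} < (1.45)^{k+1}$.
   Context: Fix integers $p,q\ge1$. A labeled binary tree is a rooted, ordered, full binary tree (every internal node has exactly two children) whose internal nodes are labeled "+" or "*" and whose leaves are labeled by pairs $(i,j)\in\{1,\dots,q\}\times\{1,\dots,p\}$. $\mathcal{F}_{2k+1}$ is the set of such trees with at most $2k+1$ nodes. For a tree $f$, the integer $M_f$ is defined recursively: - $M_f=1$ if $f$ is a single leaf; - $M_f=M_{f_L}+M_{f_R}$ if the root of $f$ is "+", where $f_L,f_R$ are its left and right subtrees; - $M_f=M_{f_L}\cdot M_{f_R}$ if the root of $f$ is "*". Equivalently, $M_f$ is the length of the expansion vectors $\bm{v},\bm{u}$ with $h(\bm{x};f,\bm{w})=\langle\bm{v},\bm{u}\rangle$, obtained by concatenation at "+" nodes and by all pairwise products at "*" nodes. Finally, $M_{2k+1}=\max_{f\in\mathcal{F}_{2k+1}} M_f$. *)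

theory Defs
  imports Complex_Main
begin

datatype ltree = Leaf "nat \<times> nat" | Plus ltree ltree | Times ltree ltree

fun wf_labels :: "nat \<Rightarrow> nat \<Rightarrow> ltree \<Rightarrow> bool" where
  "wf_labels p q (Leaf (i, j)) = (i \<in> {1..q} \<and> j \<in> {1..p})"
| "wf_labels p q (Plus l r) = (wf_labels p q l \<and> wf_labels p q r)"
| "wf_labels p q (Times l r) = (wf_labels p q l \<and> wf_labels p q r)"

fun nodes :: "ltree \<Rightarrow> nat" where
  "nodes (Leaf _) = 1"
| "nodes (Plus l r) = nodes l + nodes r + 1"
| "nodes (Times l r) = nodes l + nodes r + 1"

fun M :: "ltree \<Rightarrow> nat" where
  "M (Leaf _) = 1"
| "M (Plus l r) = M l + M r"
| "M (Times l r) = M l * M r"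

definition F :: "nat \<Rightarrow> nat \<Rightarrow> nat \<Rightarrow> ltree set" where
  "F p q n = {f. wf_labels p q f \<and> nodes f \<le> n}"

definition Mmax :: "nat \<Rightarrow> nat \<Rightarrow> nat \<Rightarrow> nat" where
  "Mmax p q n = Max (M ` F p q n)"

end

theory Submission
  imports Defs
begin

text \<open>A tree with \<open>n\<close> leaves has \<open>2n - 1\<close> nodes, so trees in \<open>F\<^sub>2\<^sub>k\<^sub>+\<^sub>1\<close> have at most
  \<open>k + 1\<close> leaves. By induction on the tree, \<open>M\<^sub>f\<^sup>3 \<le> 3\<^sup>n\<close> for a tree with \<open>n\<close> leaves:
  at a product node the bounds multiply, and at a sum node \<open>a + b \<le> a b\<close> unless one summand
  is \<open>1\<close>, in which case \<open>(b + 1)\<^sup>3 \<le> 3 b\<^sup>3\<close> for \<open>b \<ge> 3\<close> and small \<open>b\<close> are checked by hand.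
  Finally \<open>3 < 1.45\<^sup>3 = 3.048625\<close>.\<close>

fun leaves :: "ltree \<Rightarrow> nat" where
  "leaves (Leaf _) = 1"
| "leaves (Plus l r) = leaves l + leaves r"
| "leaves (Times l r) = leaves l + leaves r"

lemma nodes_eq_leaves: "nodes f + 1 = 2 * leaves f"
  by (induction f) auto

lemma leaves_pos: "1 \<le> leaves f"
  by (induction f) auto

lemma M_pos: "1 \<le> M f"
  by (induction f) auto

lemma Suc_cube_le_pow3:
  fixes b y :: nat
  assumes "1 \<le> y" and "b ^ 3 \<le> 3 ^ y"
  shows "(b + 1) ^ 3 \<le> 3 ^ Suc y"
proof -
  consider "b \<le> 1" | "b = 2" | "3 \<le> b" by linarith
  then show ?thesis
  proof cases
    case 1
    have "(b + 1) ^ 3 \<le> (2::nat) ^ 3" using 1 by (intro power_mono) auto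
    also have "\<dots> \<le> 3 ^ Suc 1" by simp
    also have "\<dots> \<le> 3 ^ Suc y" using assms(1) by (intro power_increasing) auto
    finally show ?thesis .
  next
    case 2
    then have "(3::nat) ^ 1 < 3 ^ y" using assms(2) by simp
    then have "2 \<le> y" using power_less_imp_less_exp[of "3::nat" 1 y] by simp
    then have "(3::nat) ^ Suc 2 \<le> 3 ^ Suc y" by (intro power_increasing) auto
    then show ?thesis using 2 by simp
  next
    case 3
    then obtain c where "b = c + 3" using le_Suc_ex by (metis add.commute)
    then have "(b + 1) ^ 3 \<le> 3 * b ^ 3" by (simp add: power3_eq_cube algebra_simps)
    also have "\<dots> \<le> 3 ^ Suc y" using assms(2) by simp
    finally show ?thesis .
  qed
qed

lemma add_cube_le_pow3:
  fixes a b x y :: nat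
  assumes "1 \<le> a" "1 \<le> b" "1 \<le> x" "1 \<le> y"
    and a: "a ^ 3 \<le> 3 ^ x" and b: "b ^ 3 \<le> 3 ^ y"
  shows "(a + b) ^ 3 \<le> 3 ^ (x + y)"
proof -
  consider "a = 1" | "b = 1" | "2 \<le> a" "2 \<le> b" using assms(1,2) by linarith
  then show ?thesis
  proof cases
    case 1
    have "(a + b) ^ 3 = (b + 1) ^ 3" using 1 by simp
    also have "\<dots> \<le> 3 ^ Suc y" by (rule Suc_cube_le_pow3[OF \<open>1 \<le> y\<close> b])
    also have "\<dots> \<le> 3 ^ (x + y)" using \<open>1 \<le> x\<close> by (intro power_increasing) simp_all
    finally show ?thesis .
  next
    case 2
    have "(a + b) ^ 3 = (a + 1) ^ 3" using 2 by simp
    also have "\<dots> \<le> 3 ^ Suc x" by (rule Suc_cube_le_pow3[OF \<open>1 \<le> x\<close> a])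
    also have "\<dots> \<le> 3 ^ (x + y)" using \<open>1 \<le> y\<close> by (intro power_increasing) simp_all
    finally show ?thesis .
  next
    case 3
    then obtain c d where "a = c + 2" "b = d + 2" by (metis le_add_diff_inverse2)
    then have "a + b \<le> a * b" by (simp add: algebra_simps)
    then have "(a + b) ^ 3 \<le> (a * b) ^ 3" by (rule power_mono) simp
    also have "\<dots> \<le> 3 ^ x * 3 ^ y" unfolding power_mult_distrib using a b by (rule mult_le_mono)
    finally show ?thesis by (simp add: power_add)
  qed
qed

lemma M_cube_le_pow3_leaves: "M f ^ 3 \<le> 3 ^ leaves f"
proof (induction f)
  case (Plus l r)
  then show ?case using add_cube_le_pow3[OF M_pos M_pos leaves_pos leaves_pos] by simp
next
  case (Times l r)
  then show ?case by (simp add: power_mult_distrib power_add mult_le_mono)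
qed simp

lemma M_cube_le_of_nodes:
  assumes "nodes f \<le> 2 * k + 1"
  shows "M f ^ 3 \<le> 3 ^ (k + 1)"
proof -
  have "leaves f \<le> k + 1" using nodes_eq_leaves[of f] assms by linarith
  then have "(3::nat) ^ leaves f \<le> 3 ^ (k + 1)" by (intro power_increasing) auto
  then show ?thesis using M_cube_le_pow3_leaves[of f] by linarith
qed

lemma Mmax_cube_le:
  assumes "1 \<le> p" "1 \<le> q"
  shows "Mmax p q (2 * k + 1) ^ 3 \<le> 3 ^ (k + 1)"
proof -
  let ?S = "M ` F p q (2 * k + 1)"
  have bound: "m ^ 3 \<le> 3 ^ (k + 1)" if "m \<in> ?S" for m
    using that M_cube_le_of_nodes by (auto simp: F_def)
  have "m \<le> m ^ 3" for m :: nat by (cases m) (auto simp: power3_eq_cube)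
  then have "?S \<subseteq> {..3 ^ (k + 1)}" using bound by (meson atMost_iff le_trans subsetI)
  then have "finite ?S" by (rule finite_subset) simp
  moreover have "Leaf (1, 1) \<in> F p q (2 * k + 1)" using assms by (simp add: F_def)
  ultimately have "Mmax p q (2 * k + 1) \<in> ?S" unfolding Mmax_def by (intro Max_in) auto
  then show ?thesis by (rule bound)
qed

lemma less_pow_of_cube_le_pow3:
  fixes m n :: nat
  assumes "1 \<le> n" and "m ^ 3 \<le> 3 ^ n"
  shows "real m < 1.45 ^ n"
proof -
  have "real m ^ 3 \<le> 3 ^ n" using assms(2) by (metis of_nat_le_iff of_nat_numeral of_nat_power)
  also have "(3::real) ^ n < (1.45 ^ 3) ^ n" using assms(1) by (intro power_strict_mono) (auto simp: power3_eq_cube)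
  also have "\<dots> = (1.45 ^ n) ^ 3" by (metis power_mult mult.commute)
  finally show ?thesis by (rule power_less_imp_less_base) simp
qed

theorem lemma3:
  fixes p q k :: nat
  assumes "p \<ge> 1" and "q \<ge> 1"
  shows "real (Mmax p q (2 * k + 1)) < (1.45::real) ^ (k + 1)"
  using less_pow_of_cube_le_pow3[OF _ Mmax_cube_le[OF assms]] by simp

end
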